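(* Let $D=(V,A)$ be a digraph and $b\in\mathbb{Z}_{>0}^V$ such that $A$ can be partitioned into two $b$-branchings $B_1,B_2$. Let $b'_1,b'_2\in\mathbb{Z}_{\ge0}^V$ satisfy $b'_1+b'_2=d^-_A$, $b'_1\le b$ and $b'_2\le b$. Then $A$ can be partitioned into two $b$-branchings $B'_1,B'_2$ with $d^-_{B'_1}=b'_1$ and $d^-_{B'_2}=b'_2$ if and only if $b'_1(X)<b(X)$ and $b'_2(X)<b(X)$ for every source component $X$ of $D$.
   Context: $d^-_B\in\mathbb{Z}^V$ is the indegree vector of $(V,B)$; for a vector $c$ and $X\subseteq V$, $c(X)=\sum_{v\in X}c(v)$. An arc set $B\subseteq A$ is a $b$-branching if $d^-_B(v)\le b(v)$ for all $v\in V$ and $|B[X]|\le b(X)-1$ for every nonempty $X\subseteq V$, where $B[X]$ is the set of arcs of $B$ with both ends in $X$. A source component of $D$ is a strongly connected component $X$ of $D$ with no arc of $A$ entering $X$. *)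

theory Defs
  imports Main
begin

text \<open>A digraph D = (V, A) is given by a finite vertex set V, a finite set A of arc
  identifiers (parallel arcs allowed), and tail/head maps. An arc a goes from tail a to head a.\<close>

definition digraph :: "'v set \<Rightarrow> 'e set \<Rightarrow> ('e \<Rightarrow> 'v) \<Rightarrow> ('e \<Rightarrow> 'v) \<Rightarrow> bool" where
  "digraph V A tail head \<longleftrightarrow> finite V \<and> finite A \<and> (\<forall>a\<in>A. tail a \<in> V \<and> head a \<in> V)"

definition indeg :: "'e set \<Rightarrow> ('e \<Rightarrow> 'v) \<Rightarrow> 'v \<Rightarrow> int" where
  "indeg B head v = int (card {a \<in> B. head a = v})"

definition vsum :: "('v \<Rightarrow> int) \<Rightarrow> 'v set \<Rightarrow> int" where
  "vsum c X = (\<Sum>v\<in>X. c v)"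

definition induced_arcs :: "'e set \<Rightarrow> ('e \<Rightarrow> 'v) \<Rightarrow> ('e \<Rightarrow> 'v) \<Rightarrow> 'v set \<Rightarrow> 'e set" where
  "induced_arcs B tail head X = {a \<in> B. tail a \<in> X \<and> head a \<in> X}"

definition b_branching ::
  "'v set \<Rightarrow> ('e \<Rightarrow> 'v) \<Rightarrow> ('e \<Rightarrow> 'v) \<Rightarrow> ('v \<Rightarrow> int) \<Rightarrow> 'e set \<Rightarrow> bool" where
  "b_branching V tail head b B \<longleftrightarrow>
     (\<forall>v\<in>V. indeg B head v \<le> b v) \<and>
     (\<forall>X. X \<subseteq> V \<and> X \<noteq> {} \<longrightarrow> int (card (induced_arcs B tail head X)) \<le> vsum b X - 1)"

definition reach :: "'e set \<Rightarrow> ('e \<Rightarrow> 'v) \<Rightarrow> ('e \<Rightarrow> 'v) \<Rightarrow> 'v \<Rightarrow> 'v \<Rightarrow> bool" where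
  "reach A tail head u w \<longleftrightarrow> (u, w) \<in> {(tail a, head a) | a. a \<in> A}\<^sup>*"

definition scc :: "'v set \<Rightarrow> 'e set \<Rightarrow> ('e \<Rightarrow> 'v) \<Rightarrow> ('e \<Rightarrow> 'v) \<Rightarrow> 'v set \<Rightarrow> bool" where
  "scc V A tail head X \<longleftrightarrow> X \<noteq> {} \<and> X \<subseteq> V \<and>
     (\<forall>u\<in>X. \<forall>w\<in>V. w \<in> X \<longleftrightarrow> (reach A tail head u w \<and> reach A tail head w u))"

definition source_component :: "'v set \<Rightarrow> 'e set \<Rightarrow> ('e \<Rightarrow> 'v) \<Rightarrow> ('e \<Rightarrow> 'v) \<Rightarrow> 'v set \<Rightarrow> bool" where
  "source_component V A tail head X \<longleftrightarrow> scc V A tail head X \<and>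
     \<not> (\<exists>a\<in>A. tail a \<notin> X \<and> head a \<in> X)"

end

theory Submission
  imports Defs
begin

text \<open>Necessity: no arc enters a source component X, so the arcs of a b-branching with heads in X
  all lie inside X, whence b'_i(X) = |B'_i[X]| \<le> b(X) - 1.

  Sufficiency: let R_i be the vertices with b'_i(v) < b(v). By Edmonds' branching theorem for two
  root sets, A contains disjoint arc sets F_1, F_2 such that F_i has no arc into R_i, at most one
  arc into every other vertex, and reaches every vertex from R_i, provided every nonempty X is
  entered by at least as many arcs as the number of root sets it misses. This cut condition holds:
  if X misses both root sets then b'_1 = b'_2 = b on X, so 2b(X) arcs end in X, while B_1 and B_2
  together have at most 2b(X) - 2 arcs inside X; and if no arc enters X, then X contains a source
  component, which meets both root sets by hypothesis. Padding F_i with further arcs to the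
  indegrees b'_i gives the partition; each part is a b-branching because every vertex is reached
  from a vertex of indegree below b.\<close>

lemma reach_refl: "reach F tail head v v"
  by (simp add: reach_def)

lemma reach_trans: "reach F tail head u v \<Longrightarrow> reach F tail head v w \<Longrightarrow> reach F tail head u w"
  unfolding reach_def by (rule rtrancl_trans)

lemma reach_arc: "a \<in> F \<Longrightarrow> reach F tail head (tail a) (head a)"
  unfolding reach_def by blast

lemma reach_mono: "F \<subseteq> F' \<Longrightarrow> reach F tail head u w \<Longrightarrow> reach F' tail head u w"
  unfolding reach_def by (erule rev_subsetD, intro rtrancl_mono) blast

lemma reach_into_closed:
  assumes "reach F tail head u w" "w \<in> Y" "\<forall>a\<in>F. head a \<in> Y \<longrightarrow> tail a \<in> Y"
  shows "u \<in> Y"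
  using assms(1,2) unfolding reach_def
  by (induction rule: converse_rtrancl_induct) (use assms(3) in auto)

definition entering :: "'e set \<Rightarrow> ('e \<Rightarrow> 'v) \<Rightarrow> ('e \<Rightarrow> 'v) \<Rightarrow> 'v set \<Rightarrow> 'e set" where
  "entering A tail head X = {a \<in> A. tail a \<notin> X \<and> head a \<in> X}"

lemma card_entering_submodular:
  assumes "finite A"
  shows "card (entering A tail head (X \<inter> Y)) + card (entering A tail head (X \<union> Y))
    \<le> card (entering A tail head X) + card (entering A tail head Y)"
proof -
  let ?ind = "\<lambda>Z a. if tail a \<notin> Z \<and> head a \<in> Z then 1 else (0::nat)"
  have card_eq: "card (entering A tail head Z) = (\<Sum>a\<in>A. ?ind Z a)" for Z
    using assms by (simp add: entering_def sum.inter_filter[symmetric])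
  have "(\<Sum>a\<in>A. ?ind (X \<inter> Y) a + ?ind (X \<union> Y) a) \<le> (\<Sum>a\<in>A. ?ind X a + ?ind Y a)"
    by (rule sum_mono) auto
  then show ?thesis by (simp only: card_eq sum.distrib)
qed

lemma entering_empty_iff: "entering A tail head X = {} \<longleftrightarrow> (\<forall>a\<in>A. head a \<in> X \<longrightarrow> tail a \<in> X)"
  by (auto simp: entering_def)

lemma finite_entering: "finite A \<Longrightarrow> finite (entering A tail head X)"
  by (simp add: entering_def)

lemma card_heads_in:
  assumes "finite A" "finite Y"
  shows "card {a \<in> A. head a \<in> Y} = (\<Sum>v\<in>Y. card {a \<in> A. head a = v})"
proof -
  have "card (\<Union>v\<in>Y. {a \<in> A. head a = v}) = (\<Sum>v\<in>Y. card {a \<in> A. head a = v})"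
    using assms by (intro card_UN_disjoint) auto
  moreover have "(\<Union>v\<in>Y. {a \<in> A. head a = v}) = {a \<in> A. head a \<in> Y}" by blast
  ultimately show ?thesis by simp
qed

definition roots_missed :: "'v set \<Rightarrow> 'v set \<Rightarrow> 'v set \<Rightarrow> nat" where
  "roots_missed R1 R2 X = (if X \<inter> R1 = {} then 1 else 0) + (if X \<inter> R2 = {} then 1 else 0)"

definition cut_condition ::
  "'v set \<Rightarrow> 'e set \<Rightarrow> ('e \<Rightarrow> 'v) \<Rightarrow> ('e \<Rightarrow> 'v) \<Rightarrow> 'v set \<Rightarrow> 'v set \<Rightarrow> bool" where
  "cut_condition V A tail head R1 R2 \<longleftrightarrow>
     (\<forall>X. X \<subseteq> V \<and> X \<noteq> {} \<longrightarrow> roots_missed R1 R2 X \<le> card (entering A tail head X))"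

text \<open>Deleting an arc that enters a tight set would violate the cut condition there.\<close>
definition tight ::
  "'v set \<Rightarrow> 'e set \<Rightarrow> ('e \<Rightarrow> 'v) \<Rightarrow> ('e \<Rightarrow> 'v) \<Rightarrow> 'v set \<Rightarrow> 'v set \<Rightarrow> 'v set \<Rightarrow> bool" where
  "tight V A tail head R1 R2 X \<longleftrightarrow>
     X \<subseteq> V \<and> X \<inter> R1 \<noteq> {} \<and> X \<inter> R2 = {} \<and> card (entering A tail head X) = 1"

definition spanning_branching ::
  "'v set \<Rightarrow> ('e \<Rightarrow> 'v) \<Rightarrow> ('e \<Rightarrow> 'v) \<Rightarrow> 'v set \<Rightarrow> 'e set \<Rightarrow> bool" where
  "spanning_branching V tail head R F \<longleftrightarrow>
     (\<forall>v\<in>V. card {a \<in> F. head a = v} \<le> (if v \<in> R then 0 else 1)) \<and>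
     (\<forall>v\<in>V. \<exists>r\<in>R. reach F tail head r v)"

lemma cut_condition_commute:
  "cut_condition V A tail head R2 R1 \<longleftrightarrow> cut_condition V A tail head R1 R2"
  by (simp add: cut_condition_def roots_missed_def add.commute)

lemma cut_conditionD:
  "cut_condition V A tail head R1 R2 \<Longrightarrow> X \<subseteq> V \<Longrightarrow> X \<noteq> {} \<Longrightarrow>
    roots_missed R1 R2 X \<le> card (entering A tail head X)"
  by (simp add: cut_condition_def)

lemma tight_Int:
  assumes "finite A" and cut: "cut_condition V A tail head R1 R2"
    and X: "tight V A tail head R1 R2 X" and M: "tight V A tail head R1 R2 M"
    and "X \<inter> M \<noteq> {}"
  shows "tight V A tail head R1 R2 (X \<inter> M)"
proof -
  have XM: "X \<subseteq> V" "M \<subseteq> V" "X \<inter> R2 = {}" "M \<inter> R2 = {}" "X \<inter> R1 \<noteq> {}"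
    using X M by (auto simp: tight_def)
  have "card (entering A tail head (X \<inter> M)) + card (entering A tail head (X \<union> M)) \<le> 2"
    using card_entering_submodular[OF \<open>finite A\<close>, of tail head X M] X M by (simp add: tight_def)
  moreover have "roots_missed R1 R2 (X \<union> M) \<le> card (entering A tail head (X \<union> M))"
    using XM by (intro cut_conditionD[OF cut]) auto
  moreover have "roots_missed R1 R2 (X \<union> M) = 1"
    using XM by (auto simp: roots_missed_def)
  ultimately have at_most_one: "card (entering A tail head (X \<inter> M)) \<le> 1" by linarith
  have "roots_missed R1 R2 (X \<inter> M) \<le> card (entering A tail head (X \<inter> M))"
    using XM \<open>X \<inter> M \<noteq> {}\<close> by (intro cut_conditionD[OF cut]) auto
  moreover have "roots_missed R1 R2 (X \<inter> M) = (if X \<inter> M \<inter> R1 = {} then 2 else 1)"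
    using XM by (auto simp: roots_missed_def)
  ultimately have "X \<inter> M \<inter> R1 \<noteq> {}" "card (entering A tail head (X \<inter> M)) = 1"
    using at_most_one by (auto split: if_splits)
  then show ?thesis using XM by (auto simp: tight_def)
qed

lemma cut_condition_remove_arc:
  assumes "finite A" "e \<in> A" "head e \<notin> R1" and cut: "cut_condition V A tail head R1 R2"
    and not_entering_tight: "\<forall>X. tight V A tail head R1 R2 X \<and> head e \<in> X \<longrightarrow> tail e \<in> X"
  shows "cut_condition V (A - {e}) tail head (insert (head e) R1) R2"
  unfolding cut_condition_def
proof (intro allI impI)
  fix X assume X: "X \<subseteq> V \<and> X \<noteq> {}"
  have old: "roots_missed R1 R2 X \<le> card (entering A tail head X)"
    using X by (intro cut_conditionD[OF cut]) auto
  have missed_le: "roots_missed (insert (head e) R1) R2 X \<le> roots_missed R1 R2 X"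
    by (auto simp: roots_missed_def)
  have removed: "entering (A - {e}) tail head X = entering A tail head X - {e}"
    by (auto simp: entering_def)
  show "roots_missed (insert (head e) R1) R2 X \<le> card (entering (A - {e}) tail head X)"
  proof (cases "e \<in> entering A tail head X")
    case False
    then show ?thesis using old missed_le removed by simp
  next
    case True
    then have e_enters: "tail e \<notin> X" "head e \<in> X" by (auto simp: entering_def)
    have "card (entering A tail head X) \<ge> 2" if "X \<inter> R2 = {}"
    proof (rule ccontr)
      assume "\<not> ?thesis"
      then have "card (entering A tail head X) \<le> 1" by simp
      then have "X \<inter> R1 \<noteq> {}" "card (entering A tail head X) = 1"
        using old that by (auto simp: roots_missed_def split: if_splits)
      then have "tight V A tail head R1 R2 X" using X that by (simp add: tight_def)
      then show False using not_entering_tight e_enters by blast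
    qed
    moreover have "finite (entering A tail head X)" by (rule finite_entering[OF \<open>finite A\<close>])
    ultimately show ?thesis
      using True e_enters removed by (auto simp: roots_missed_def)
  qed
qed

text \<open>The arc is taken from a minimal tight set meeting V - R1 (or is any arc into V - R1 if there
  is no such set); since tight sets are closed under nonempty intersection, it enters no tight set.\<close>
lemma exists_arc_growing_roots:
  assumes "finite V" "finite A" "\<forall>a\<in>A. tail a \<in> V \<and> head a \<in> V"
    and "R1 \<subseteq> V" "R1 \<noteq> V" and cut: "cut_condition V A tail head R1 R2"
  shows "\<exists>e\<in>A. tail e \<in> R1 \<and> head e \<in> V - R1 \<and>
    cut_condition V (A - {e}) tail head (insert (head e) R1) R2"
proof (cases "\<exists>M. tight V A tail head R1 R2 M \<and> M - R1 \<noteq> {}")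
  case False
  have "roots_missed R1 R2 (V - R1) \<le> card (entering A tail head (V - R1))"
    using assms(4,5) by (intro cut_conditionD[OF cut]) auto
  moreover have "roots_missed R1 R2 (V - R1) \<ge> 1"
    by (simp add: roots_missed_def Int_commute)
  ultimately have "entering A tail head (V - R1) \<noteq> {}" by auto
  then obtain e where "e \<in> entering A tail head (V - R1)" by blast
  then have e: "e \<in> A" "tail e \<in> R1" "head e \<in> V - R1"
    using assms(3) by (auto simp: entering_def)
  moreover have "tail e \<in> X" if "tight V A tail head R1 R2 X" "head e \<in> X" for X
  proof -
    have "X - R1 \<noteq> {}" using that(2) e(3) by blast
    then show ?thesis using False that(1) by blast
  qed
  ultimately show ?thesis
    using cut_condition_remove_arc[OF \<open>finite A\<close> e(1) _ cut] by blast
next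
  case True
  then obtain M0 where "tight V A tail head R1 R2 M0 \<and> M0 - R1 \<noteq> {}" by blast
  then obtain M where M: "tight V A tail head R1 R2 M" "M - R1 \<noteq> {}"
    and M_min: "\<forall>Y. tight V A tail head R1 R2 Y \<and> Y - R1 \<noteq> {} \<longrightarrow> card M \<le> card Y"
    using ex_has_least_nat[of "\<lambda>Y. tight V A tail head R1 R2 Y \<and> Y - R1 \<noteq> {}" M0 card] by blast
  have "M \<subseteq> V" "M \<inter> R2 = {}" "card (entering A tail head M) = 1"
    using M by (auto simp: tight_def)
  have "roots_missed R1 R2 (M - R1) \<le> card (entering A tail head (M - R1))"
    using M(2) \<open>M \<subseteq> V\<close> by (intro cut_conditionD[OF cut]) auto
  moreover have "roots_missed R1 R2 (M - R1) = 2"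
    using \<open>M \<inter> R2 = {}\<close> by (auto simp: roots_missed_def)
  ultimately have "card (entering A tail head M) < card (entering A tail head (M - R1))"
    using \<open>card (entering A tail head M) = 1\<close> by simp
  then have "\<not> entering A tail head (M - R1) \<subseteq> entering A tail head M"
    using card_mono[OF finite_entering[OF \<open>finite A\<close>]] by (meson leD)
  then obtain e where e: "e \<in> A" "tail e \<in> M \<inter> R1" "head e \<in> M - R1"
    by (auto simp: entering_def)
  have "tail e \<in> X" if X: "tight V A tail head R1 R2 X" "head e \<in> X" for X
  proof (rule ccontr)
    assume "tail e \<notin> X"
    have "tight V A tail head R1 R2 (X \<inter> M)"
      using X(2) e by (intro tight_Int[OF \<open>finite A\<close> cut X(1) M(1)]) auto
    then have "card M \<le> card (X \<inter> M)" using M_min X(2) e by blast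
    moreover have "card (X \<inter> M) < card M"
      using \<open>tail e \<notin> X\<close> e \<open>M \<subseteq> V\<close> \<open>finite V\<close>
      by (intro psubset_card_mono) (auto intro: finite_subset)
    ultimately show False by simp
  qed
  then show ?thesis
    using cut_condition_remove_arc[OF \<open>finite A\<close> e(1) _ cut] e \<open>M \<subseteq> V\<close> by blast
qed

lemma spanning_branching_insert_arc:
  assumes F: "spanning_branching V tail head (insert (head e) R) F"
    and "head e \<notin> R" "tail e \<in> R" "e \<notin> F" "finite F"
  shows "spanning_branching V tail head R (insert e F)"
  unfolding spanning_branching_def
proof (intro conjI ballI)
  fix w assume w: "w \<in> V"
  have "card {a \<in> F. head a = w} \<le> (if w \<in> insert (head e) R then 0 else 1)"
    using F w by (simp add: spanning_branching_def)
  moreover have "{a \<in> insert e F. head a = w} =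
      (if head e = w then insert e {a \<in> F. head a = w} else {a \<in> F. head a = w})"
    by auto
  ultimately show "card {a \<in> insert e F. head a = w} \<le> (if w \<in> R then 0 else 1)"
    using assms by (auto split: if_splits)
  obtain r where r: "r \<in> insert (head e) R" "reach F tail head r w"
    using F w by (auto simp: spanning_branching_def)
  then have "reach (insert e F) tail head r w" by (blast intro: reach_mono)
  moreover have "reach (insert e F) tail head (tail e) (head e)" by (simp add: reach_arc)
  ultimately show "\<exists>r\<in>R. reach (insert e F) tail head r w"
    using r(1) \<open>tail e \<in> R\<close> by (auto intro: reach_trans)
qed

theorem disjoint_spanning_branchings:
  assumes "finite V" "finite A" "\<forall>a\<in>A. tail a \<in> V \<and> head a \<in> V"
    and "R1 \<subseteq> V" "R2 \<subseteq> V" "cut_condition V A tail head R1 R2"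
  shows "\<exists>F1 F2. F1 \<subseteq> A \<and> F2 \<subseteq> A \<and> F1 \<inter> F2 = {} \<and>
    spanning_branching V tail head R1 F1 \<and> spanning_branching V tail head R2 F2"
  using assms(2-)
proof (induction "card (V - R1) + card (V - R2)" arbitrary: A R1 R2 rule: less_induct)
  case less
  have grow: "\<exists>F1 F2. F1 \<subseteq> A \<and> F2 \<subseteq> A \<and> F1 \<inter> F2 = {} \<and>
      spanning_branching V tail head S1 F1 \<and> spanning_branching V tail head S2 F2"
    if S: "S1 \<noteq> V" "S1 \<subseteq> V" "S2 \<subseteq> V" "cut_condition V A tail head S1 S2"
      and same_measure: "card (V - S1) + card (V - S2) = card (V - R1) + card (V - R2)" for S1 S2
  proof -
    obtain e where e: "e \<in> A" "tail e \<in> S1" "head e \<in> V - S1"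
      and cut: "cut_condition V (A - {e}) tail head (insert (head e) S1) S2"
      using exists_arc_growing_roots[OF \<open>finite V\<close> less.prems(1,2) S(2,1,4)] by blast
    have "card (V - insert (head e) S1) < card (V - S1)"
      using e \<open>finite V\<close> by (intro psubset_card_mono) auto
    then obtain F1 F2 where F: "F1 \<subseteq> A - {e}" "F2 \<subseteq> A - {e}" "F1 \<inter> F2 = {}"
      "spanning_branching V tail head (insert (head e) S1) F1" "spanning_branching V tail head S2 F2"
      using less.hyps[of "insert (head e) S1" S2 "A - {e}"] same_measure S(2,3) e(3) cut less.prems(1,2)
      by auto
    have "spanning_branching V tail head S1 (insert e F1)"
      using F(1,4) e less.prems(1) by (intro spanning_branching_insert_arc) (auto intro: finite_subset)
    then show ?thesis using F e by (intro exI[of _ "insert e F1"] exI[of _ F2]) auto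
  qed
  consider "R1 \<noteq> V" | "R2 \<noteq> V" | "R1 = V" "R2 = V" by blast
  then show ?case
  proof cases
    case 1
    then show ?thesis using grow less.prems by blast
  next
    case 2
    then obtain F2 F1 where "F2 \<subseteq> A" "F1 \<subseteq> A" "F2 \<inter> F1 = {}"
      "spanning_branching V tail head R2 F2" "spanning_branching V tail head R1 F1"
      using grow[of R2 R1] less.prems by (auto simp: cut_condition_commute add.commute)
    then show ?thesis by blast
  next
    case 3
    then have "spanning_branching V tail head R1 {}" "spanning_branching V tail head R2 {}"
      by (auto simp: spanning_branching_def intro: reach_refl)
    then show ?thesis by blast
  qed
qed

lemma vsum_indeg:
  assumes "finite A" "finite X"
  shows "vsum (indeg A head) X =
    int (card (induced_arcs A tail head X)) + int (card (entering A tail head X))"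
proof -
  have "{a \<in> A. head a \<in> X} = induced_arcs A tail head X \<union> entering A tail head X"
    by (auto simp: induced_arcs_def entering_def)
  moreover have "induced_arcs A tail head X \<inter> entering A tail head X = {}"
    by (auto simp: induced_arcs_def entering_def)
  ultimately have "card {a \<in> A. head a \<in> X} =
      card (induced_arcs A tail head X) + card (entering A tail head X)"
    using assms(1) by (simp add: card_Un_disjoint induced_arcs_def entering_def)
  moreover have "vsum (indeg A head) X = int (card {a \<in> A. head a \<in> X})"
    using card_heads_in[OF assms, of head] by (simp add: vsum_def indeg_def)
  ultimately show ?thesis by simp
qed

lemma vsum_indeg_less_if_no_entering:
  assumes "b_branching V tail head b B" "finite B" "X \<subseteq> V" "X \<noteq> {}" "finite X"
    and "entering B tail head X = {}"
  shows "vsum (indeg B head) X < vsum b X"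
  using assms vsum_indeg[OF assms(2,5), of head tail] by (force simp: b_branching_def)

lemma vsum_indeg_le_two_branchings:
  assumes "B1 \<union> B2 = A" "B1 \<inter> B2 = {}" "finite A"
    and "b_branching V tail head b B1" "b_branching V tail head b B2"
    and "X \<subseteq> V" "X \<noteq> {}" "finite X"
  shows "vsum (indeg A head) X \<le> 2 * vsum b X - 2 + int (card (entering A tail head X))"
proof -
  have "induced_arcs A tail head X = induced_arcs B1 tail head X \<union> induced_arcs B2 tail head X"
    "induced_arcs B1 tail head X \<inter> induced_arcs B2 tail head X = {}"
    using assms(1,2) by (auto simp: induced_arcs_def)
  moreover have "finite (induced_arcs Bi tail head X)" if "Bi \<subseteq> A" for Bi
    using that assms(3) by (auto simp: induced_arcs_def intro: finite_subset)
  ultimately have "card (induced_arcs A tail head X) =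
      card (induced_arcs B1 tail head X) + card (induced_arcs B2 tail head X)"
    using assms(1) by (metis card_Un_disjoint sup_ge1 sup_ge2)
  moreover have "int (card (induced_arcs B1 tail head X)) \<le> vsum b X - 1"
    "int (card (induced_arcs B2 tail head X)) \<le> vsum b X - 1"
    using assms(4-7) by (simp_all add: b_branching_def)
  ultimately show ?thesis
    using vsum_indeg[OF assms(3,8), of head tail] by linarith
qed

lemma card_induced_arcs:
  assumes "finite B" "finite Y"
  shows "card (induced_arcs B tail head Y) = (\<Sum>v\<in>Y. card {a \<in> B. tail a \<in> Y \<and> head a = v})"
proof -
  have "induced_arcs B tail head Y = {a \<in> {a \<in> B. tail a \<in> Y}. head a \<in> Y}"
    by (auto simp: induced_arcs_def)
  then show ?thesis
    using card_heads_in[of "{a \<in> B. tail a \<in> Y}" Y head] assms by simp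
qed

text \<open>If every vertex of Y had b in-arcs from Y, no arc would enter Y, and the deficient vertex
  from which Y is reached would lie in Y.\<close>
lemma b_branching_if_reachable_from_deficient:
  assumes "finite V" "finite B"
    and indeg_le: "\<forall>v\<in>V. indeg B head v \<le> b v"
    and reach_deficient: "\<forall>w\<in>V. \<exists>r\<in>V. indeg B head r < b r \<and> reach B tail head r w"
  shows "b_branching V tail head b B"
  unfolding b_branching_def
proof (intro conjI allI impI indeg_le)
  fix Y assume Y: "Y \<subseteq> V \<and> Y \<noteq> {}"
  then have "finite Y" using \<open>finite V\<close> finite_subset by blast
  define d where "d v = int (card {a \<in> B. tail a \<in> Y \<and> head a = v})" for v
  have d_le: "d v \<le> indeg B head v" for v
    unfolding d_def indeg_def using \<open>finite B\<close> by (auto intro: card_mono)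
  have d_le_b: "d v \<le> b v" if "v \<in> Y" for v
    using that Y d_le[of v] indeg_le by (meson order_trans subsetD)
  have "\<exists>v\<in>Y. d v < b v"
  proof (rule ccontr)
    assume no_deficient: "\<not> ?thesis"
    then have d_eq: "d v = indeg B head v" if "v \<in> Y" for v
      using that d_le_b[of v] d_le[of v] indeg_le Y by force
    have "tail a \<in> Y" if "a \<in> B" "head a \<in> Y" for a
    proof -
      have "{a' \<in> B. tail a' \<in> Y \<and> head a' = head a} = {a' \<in> B. head a' = head a}"
        using d_eq[OF that(2)] \<open>finite B\<close> unfolding d_def indeg_def
        by (intro card_subset_eq) auto
      then show ?thesis using that by blast
    qed
    moreover obtain w where "w \<in> Y" using Y by blast
    moreover obtain r where "r \<in> V" "indeg B head r < b r" "reach B tail head r w"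
      using reach_deficient \<open>w \<in> Y\<close> Y by blast
    ultimately show False
      using reach_into_closed[of B tail head r w Y] d_eq no_deficient by force
  qed
  then obtain v0 where v0: "v0 \<in> Y" "d v0 \<le> b v0 - 1" by force
  have "int (card (induced_arcs B tail head Y)) = d v0 + (\<Sum>v\<in>Y - {v0}. d v)"
    using card_induced_arcs[OF \<open>finite B\<close> \<open>finite Y\<close>] sum.remove[OF \<open>finite Y\<close> v0(1)]
    by (simp add: d_def)
  also have "\<dots> \<le> (b v0 - 1) + (\<Sum>v\<in>Y - {v0}. b v)"
    using v0 d_le_b by (intro add_mono sum_mono) auto
  also have "\<dots> = vsum b Y - 1"
    by (simp add: vsum_def sum.remove[OF \<open>finite Y\<close> v0(1)])
  finally show "int (card (induced_arcs B tail head Y)) \<le> vsum b Y - 1" .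
qed

lemma b_branching_if_spanning_branching_within:
  assumes "finite V" "finite B" "F \<subseteq> B" "spanning_branching V tail head R F"
    and "\<forall>v\<in>V. indeg B head v \<le> b v" "\<forall>r\<in>R. indeg B head r < b r" "R \<subseteq> V"
  shows "b_branching V tail head b B"
proof (rule b_branching_if_reachable_from_deficient[OF assms(1,2,5)], intro ballI)
  fix w assume "w \<in> V"
  then obtain r where "r \<in> R" "reach F tail head r w"
    using assms(4) unfolding spanning_branching_def by blast
  moreover from this(2) have "reach B tail head r w" by (rule reach_mono[OF assms(3)])
  ultimately show "\<exists>r\<in>V. indeg B head r < b r \<and> reach B tail head r w"
    using assms(6,7) by blast
qed

lemma indeg_le_if_spanning_branching:
  assumes "spanning_branching V tail head {v \<in> V. c v < b v} F" "\<forall>v\<in>V. 0 \<le> c v \<and> 0 < b v"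
  shows "\<forall>v\<in>V. indeg F head v \<le> c v"
proof
  fix v assume "v \<in> V"
  then have "card {a \<in> F. head a = v} \<le> (if c v < b v then 0 else 1)"
    using assms(1) by (simp add: spanning_branching_def)
  then show "indeg F head v \<le> c v"
    using assms(2) \<open>v \<in> V\<close> by (auto simp: indeg_def split: if_splits)
qed

lemma extend_to_partition_with_indegrees:
  assumes "finite A" "\<forall>a\<in>A. head a \<in> V" "F1 \<subseteq> A" "F2 \<subseteq> A" "F1 \<inter> F2 = {}"
    and c_sum: "\<forall>v\<in>V. c1 v + c2 v = indeg A head v"
    and F_le: "\<forall>v\<in>V. indeg F1 head v \<le> c1 v \<and> indeg F2 head v \<le> c2 v"
  shows "\<exists>B1 B2. B1 \<union> B2 = A \<and> B1 \<inter> B2 = {} \<and> F1 \<subseteq> B1 \<and> F2 \<subseteq> B2 \<and>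
    (\<forall>v\<in>V. indeg B1 head v = c1 v \<and> indeg B2 head v = c2 v)"
proof -
  define In where "In F v = {a \<in> F. head a = v}" for F v
  have fin: "finite (In F v)" if "F \<subseteq> A" for F v
    using that \<open>finite A\<close> by (auto simp: In_def intro: finite_subset)
  have "\<exists>C. In F1 v \<subseteq> C \<and> C \<subseteq> In A v - F2 \<and> card C = nat (c1 v)" if "v \<in> V" for v
  proof (rule exists_subset_between)
    have "In A v - F2 = In A v - In F2 v" by (auto simp: In_def)
    then have "card (In A v - F2) = card (In A v) - card (In F2 v)"
      using fin[of F2] \<open>F2 \<subseteq> A\<close> by (simp add: card_Diff_subset In_def subset_iff)
    moreover have "card (In F2 v) \<le> card (In A v)"
      using fin[of A] \<open>F2 \<subseteq> A\<close> by (intro card_mono) (auto simp: In_def)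
    moreover have "c1 v + c2 v = int (card (In A v))" "int (card (In F2 v)) \<le> c2 v"
      using c_sum F_le that by (auto simp: indeg_def In_def)
    ultimately show "nat (c1 v) \<le> card (In A v - F2)"
      by (simp add: nat_le_iff of_nat_diff)
    show "card (In F1 v) \<le> nat (c1 v)" using F_le that by (auto simp: indeg_def In_def)
    show "In F1 v \<subseteq> In A v - F2" using assms(3,5) by (auto simp: In_def)
    show "finite (In A v - F2)" using fin[of A] by simp
  qed
  then obtain C where C: "\<And>v. v \<in> V \<Longrightarrow> In F1 v \<subseteq> C v \<and> C v \<subseteq> In A v - F2 \<and> card (C v) = nat (c1 v)"
    by metis
  define B1 where "B1 = (\<Union>v\<in>V. C v)"
  have B1_at: "In B1 v = C v" if "v \<in> V" for v
    using C that by (auto simp: B1_def In_def)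
  have "B1 \<subseteq> A" "F1 \<subseteq> B1" "F2 \<inter> B1 = {}"
    using C assms(2,3) by (fastforce simp: B1_def In_def)+
  moreover have "indeg B1 head v = c1 v" "indeg (A - B1) head v = c2 v" if "v \<in> V" for v
  proof -
    have "0 \<le> c1 v" "0 \<le> c2 v" using F_le that by (auto simp: indeg_def intro: order_trans)
    moreover have "In (A - B1) v = In A v - C v" using B1_at[OF that] by (auto simp: In_def)
    moreover have "C v \<subseteq> In A v" using C[OF that] by blast
    then have "card (In A v - C v) = card (In A v) - card (C v)" "card (C v) \<le> card (In A v)"
      using fin[of A] by (simp_all add: card_Diff_subset finite_subset card_mono)
    ultimately show "indeg B1 head v = c1 v" "indeg (A - B1) head v = c2 v"
      using C[OF that] B1_at[OF that] c_sum that by (auto simp: indeg_def In_def)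
  qed
  ultimately have "B1 \<union> (A - B1) = A \<and> B1 \<inter> (A - B1) = {} \<and> F1 \<subseteq> B1 \<and> F2 \<subseteq> A - B1 \<and>
      (\<forall>v\<in>V. indeg B1 head v = c1 v \<and> indeg (A - B1) head v = c2 v)"
    using \<open>F2 \<subseteq> A\<close> by auto
  then show ?thesis by blast
qed

text \<open>The strong component of a vertex of X with fewest ancestors is entered by no arc.\<close>
lemma exists_source_component_within:
  assumes "digraph V A tail head" "X \<subseteq> V" "X \<noteq> {}" "entering A tail head X = {}"
  shows "\<exists>C. source_component V A tail head C \<and> C \<subseteq> X"
proof -
  have "finite V" and arcs: "\<forall>a\<in>A. tail a \<in> V \<and> head a \<in> V"
    using assms(1) by (auto simp: digraph_def)
  define anc where "anc w = {u \<in> V. reach A tail head u w}" for w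
  obtain x where "x \<in> X" using assms(3) by blast
  then obtain w where "w \<in> X" and w_min: "\<forall>y. y \<in> X \<longrightarrow> card (anc w) \<le> card (anc y)"
    using ex_has_least_nat[of "\<lambda>y. y \<in> X" x "\<lambda>y. card (anc y)"] by blast
  have anc_w: "anc w \<subseteq> X"
    using reach_into_closed[OF _ \<open>w \<in> X\<close>] assms(4) by (auto simp: anc_def entering_empty_iff)
  define C where "C = {u \<in> V. reach A tail head u w \<and> reach A tail head w u}"
  have "w \<in> C" using \<open>w \<in> X\<close> assms(2) by (auto simp: C_def intro: reach_refl)
  have "scc V A tail head C"
    unfolding scc_def
  proof (intro conjI ballI)
    show "C \<noteq> {}" "C \<subseteq> V" using \<open>w \<in> C\<close> by (auto simp: C_def)
    fix u z assume "u \<in> C" "z \<in> V"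
    then show "z \<in> C \<longleftrightarrow> reach A tail head u z \<and> reach A tail head z u"
      by (auto simp: C_def intro: reach_trans)
  qed
  moreover have "tail a \<in> C" if "a \<in> A" "head a \<in> C" for a
  proof -
    have "reach A tail head (tail a) w"
      using that reach_arc reach_trans by (fastforce simp: C_def)
    then have "tail a \<in> anc w" "anc (tail a) \<subseteq> anc w"
      using that arcs by (auto simp: anc_def intro: reach_trans)
    moreover have "finite (anc w)" using \<open>finite V\<close> by (simp add: anc_def)
    ultimately have "anc (tail a) = anc w"
      using w_min anc_w by (meson card_seteq subsetD)
    then have "reach A tail head w (tail a)"
      using \<open>w \<in> C\<close> by (auto simp: anc_def C_def)
    then show ?thesis
      using \<open>reach A tail head (tail a) w\<close> that(1) arcs by (auto simp: C_def)
  qed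
  moreover have "C \<subseteq> X" using anc_w by (auto simp: anc_def C_def)
  ultimately show ?thesis by (auto simp: source_component_def)
qed

lemma ex_less_if_vsum_less: "vsum c X < vsum d X \<Longrightarrow> \<exists>v\<in>X. c v < d v"
  unfolding vsum_def by (meson not_le sum_mono)

lemma cut_condition_deficient_roots:
  assumes D: "digraph V A tail head"
    and part: "B1 \<union> B2 = A" "B1 \<inter> B2 = {}"
    and br: "b_branching V tail head b B1" "b_branching V tail head b B2"
    and c_sum: "\<forall>v\<in>V. c1 v + c2 v = indeg A head v"
    and c_le: "\<forall>v\<in>V. c1 v \<le> b v \<and> c2 v \<le> b v"
    and sources: "\<forall>X. source_component V A tail head X \<longrightarrow> vsum c1 X < vsum b X \<and> vsum c2 X < vsum b X"
  shows "cut_condition V A tail head {v \<in> V. c1 v < b v} {v \<in> V. c2 v < b v}"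
  unfolding cut_condition_def
proof (intro allI impI)
  fix X assume X: "X \<subseteq> V \<and> X \<noteq> {}"
  then have X_sub: "X \<subseteq> V" and X_ne: "X \<noteq> {}" by auto
  have "finite A" "finite X" using D X_sub by (auto simp: digraph_def intro: finite_subset)
  let ?R1 = "{v \<in> V. c1 v < b v}" and ?R2 = "{v \<in> V. c2 v < b v}"
  show "roots_missed ?R1 ?R2 X \<le> card (entering A tail head X)"
  proof (cases "X \<inter> ?R1 = {} \<and> X \<inter> ?R2 = {}")
    case True
    have "indeg A head v = 2 * b v" if "v \<in> X" for v
    proof -
      have "v \<in> V" "\<not> c1 v < b v" "\<not> c2 v < b v" using that X True by auto
      then show ?thesis using c_sum c_le by fastforce
    qed
    then have "vsum (indeg A head) X = 2 * vsum b X"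
      by (simp add: vsum_def sum_distrib_left)
    moreover have "vsum (indeg A head) X \<le> 2 * vsum b X - 2 + int (card (entering A tail head X))"
      using vsum_indeg_le_two_branchings[OF part \<open>finite A\<close> br] X \<open>finite X\<close> by blast
    moreover have "roots_missed ?R1 ?R2 X = 2" using True by (simp add: roots_missed_def)
    ultimately show ?thesis by linarith
  next
    case False
    then have "roots_missed ?R1 ?R2 X \<le> 1" by (auto simp: roots_missed_def)
    moreover have "roots_missed ?R1 ?R2 X = 0" if no_entering: "entering A tail head X = {}"
    proof -
      obtain C where C: "source_component V A tail head C" "C \<subseteq> X"
        using exists_source_component_within[OF D X_sub X_ne no_entering] by blast
      then obtain v1 v2 where "v1 \<in> C" "c1 v1 < b v1" "v2 \<in> C" "c2 v2 < b v2"
        using sources ex_less_if_vsum_less by meson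
      then show ?thesis using C(2) X by (auto simp: roots_missed_def)
    qed
    moreover have "card (entering A tail head X) \<noteq> 0" if "entering A tail head X \<noteq> {}"
      using that finite_entering[OF \<open>finite A\<close>, of tail head X] card_0_eq by blast
    ultimately show ?thesis by fastforce
  qed
qed

lemma source_component_vsum_less:
  assumes "digraph V A tail head" "B \<subseteq> A" "b_branching V tail head b B"
    and indeg_B: "\<forall>v\<in>V. indeg B head v = c v" and "source_component V A tail head X"
  shows "vsum c X < vsum b X"
proof -
  have "X \<subseteq> V" "X \<noteq> {}" "entering B tail head X = {}"
    using assms(2,5) by (auto simp: source_component_def scc_def entering_def)
  moreover have "finite B" "finite X"
    using assms(1,2) \<open>X \<subseteq> V\<close> by (auto simp: digraph_def intro: finite_subset)
  moreover have "vsum c X = vsum (indeg B head) X"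
    unfolding vsum_def using indeg_B \<open>X \<subseteq> V\<close> by (intro sum.cong) auto
  ultimately show ?thesis
    using vsum_indeg_less_if_no_entering[OF assms(3)] by simp
qed

lemma exists_partition_with_indegrees:
  assumes D: "digraph V A tail head"
    and b_pos: "\<forall>v\<in>V. b v > 0"
    and part: "B1 \<union> B2 = A" "B1 \<inter> B2 = {}"
    and br: "b_branching V tail head b B1" "b_branching V tail head b B2"
    and nn: "\<forall>v\<in>V. c1 v \<ge> 0 \<and> c2 v \<ge> 0"
    and c_sum: "\<forall>v\<in>V. c1 v + c2 v = indeg A head v"
    and c_le: "\<forall>v\<in>V. c1 v \<le> b v \<and> c2 v \<le> b v"
    and sources: "\<forall>X. source_component V A tail head X \<longrightarrow> vsum c1 X < vsum b X \<and> vsum c2 X < vsum b X"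
  shows "\<exists>B1' B2'. B1' \<union> B2' = A \<and> B1' \<inter> B2' = {} \<and>
    b_branching V tail head b B1' \<and> b_branching V tail head b B2' \<and>
    (\<forall>v\<in>V. indeg B1' head v = c1 v \<and> indeg B2' head v = c2 v)"
proof -
  let ?R1 = "{v \<in> V. c1 v < b v}" and ?R2 = "{v \<in> V. c2 v < b v}"
  have fin: "finite V" "finite A" and arcs: "\<forall>a\<in>A. tail a \<in> V \<and> head a \<in> V"
    using D by (auto simp: digraph_def)
  have R_sub: "?R1 \<subseteq> V" "?R2 \<subseteq> V" by auto
  obtain F1 F2 where F: "F1 \<subseteq> A" "F2 \<subseteq> A" "F1 \<inter> F2 = {}"
    "spanning_branching V tail head ?R1 F1" "spanning_branching V tail head ?R2 F2"
    using disjoint_spanning_branchings[OF fin arcs R_sub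
        cut_condition_deficient_roots[OF D part br c_sum c_le sources]]
    by blast
  have "\<forall>v\<in>V. 0 \<le> c1 v \<and> 0 < b v" "\<forall>v\<in>V. 0 \<le> c2 v \<and> 0 < b v"
    using nn b_pos by auto
  then have "\<forall>v\<in>V. indeg F1 head v \<le> c1 v \<and> indeg F2 head v \<le> c2 v"
    using indeg_le_if_spanning_branching[OF F(4)] indeg_le_if_spanning_branching[OF F(5)] by blast
  then obtain B1' B2' where B': "B1' \<union> B2' = A" "B1' \<inter> B2' = {}" "F1 \<subseteq> B1'" "F2 \<subseteq> B2'"
    "\<forall>v\<in>V. indeg B1' head v = c1 v \<and> indeg B2' head v = c2 v"
    using extend_to_partition_with_indegrees[OF fin(2) _ F(1-3) c_sum] arcs by blast
  moreover have "finite B1'" "finite B2'"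
    using B'(1) fin(2) by (auto intro: finite_subset)
  then have "b_branching V tail head b B1'" "b_branching V tail head b B2'"
    using b_branching_if_spanning_branching_within[OF fin(1) _ B'(3) F(4)]
      b_branching_if_spanning_branching_within[OF fin(1) _ B'(4) F(5)] B'(5) c_le R_sub
    by auto
  ultimately show ?thesis by blast
qed

theorem mainTheorem9:
  fixes V :: "'v set" and A :: "'e set" and tail head :: "'e \<Rightarrow> 'v"
    and b b1' b2' :: "'v \<Rightarrow> int" and B1 B2 :: "'e set"
  assumes D: "digraph V A tail head"
    and b_pos: "\<forall>v\<in>V. b v > 0"
    and part: "B1 \<union> B2 = A" "B1 \<inter> B2 = {}"
    and br1: "b_branching V tail head b B1" and br2: "b_branching V tail head b B2"
    and nn: "\<forall>v\<in>V. b1' v \<ge> 0 \<and> b2' v \<ge> 0"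
    and sum: "\<forall>v\<in>V. b1' v + b2' v = indeg A head v"
    and le: "\<forall>v\<in>V. b1' v \<le> b v \<and> b2' v \<le> b v"
  shows "(\<exists>B1' B2'. B1' \<union> B2' = A \<and> B1' \<inter> B2' = {} \<and>
            b_branching V tail head b B1' \<and> b_branching V tail head b B2' \<and>
            (\<forall>v\<in>V. indeg B1' head v = b1' v \<and> indeg B2' head v = b2' v))
     \<longleftrightarrow> (\<forall>X. source_component V A tail head X \<longrightarrow>
            vsum b1' X < vsum b X \<and> vsum b2' X < vsum b X)"
proof
  assume "\<exists>B1' B2'. B1' \<union> B2' = A \<and> B1' \<inter> B2' = {} \<and>
    b_branching V tail head b B1' \<and> b_branching V tail head b B2' \<and>
    (\<forall>v\<in>V. indeg B1' head v = b1' v \<and> indeg B2' head v = b2' v)"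
  then obtain B1' B2' where "B1' \<subseteq> A" "B2' \<subseteq> A"
    "b_branching V tail head b B1'" "b_branching V tail head b B2'"
    "\<forall>v\<in>V. indeg B1' head v = b1' v" "\<forall>v\<in>V. indeg B2' head v = b2' v"
    by blast
  then show "\<forall>X. source_component V A tail head X \<longrightarrow> vsum b1' X < vsum b X \<and> vsum b2' X < vsum b X"
    using source_component_vsum_less[OF D] by blast
next
  assume "\<forall>X. source_component V A tail head X \<longrightarrow> vsum b1' X < vsum b X \<and> vsum b2' X < vsum b X"
  then show "\<exists>B1' B2'. B1' \<union> B2' = A \<and> B1' \<inter> B2' = {} \<and>
    b_branching V tail head b B1' \<and> b_branching V tail head b B2' \<and>
    (\<forall>v\<in>V. indeg B1' head v = b1' v \<and> indeg B2' head v = b2' v)"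
    by (rule exists_partition_with_indegrees[OF D b_pos part br1 br2 nn sum le])
qed

end
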